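(* Let $\mathcal{N}\in\mathbb{C}^{n\times n}$ be Hermitian positive definite. Then $\Pi(P_\sharp,R_\sharp)=P_\sharp(R_\sharp^*AP_\sharp)^{-1}R_\sharp^*A$ is $\mathcal{N}$-orthogonal if and only if $V_r^*\mathcal{N}V_r$ is CF-block diagonal.
   Context: Let $A,M\in\mathbb{C}^{n\times n}$ be nonsingular with $M^{-1}A$ and $M^{-*}A^*$ diagonalizable. Let $V_r=[\bm v_{r,1},\dots,\bm v_{r,n}]$ and $V_l=[\bm v_{l,1},\dots,\bm v_{l,n}]$ be invertible matrices of right and left generalized eigenvectors of the pencil $(A,M)$, i.e. $AV_r=MV_r\Lambda$ and $V_l^*A=\Lambda V_l^*M$ with $\Lambda=\mathrm{diag}(\lambda_1,\dots,\lambda_n)$, chosen so that $V_l^*AV_r=D_a$ and $V_l^*MV_r=D_m$ are diagonal, and with the eigenvalues ordered so that $|1-\lambda_1|\ge\cdots\ge|1-\lambda_n|\ge0$. Fix $n_c\in\{1,\dots,n\}$, $n_f=n-n_c$. A matrix is CF-block diagonal if it is block diagonal with respect to the partition of indices into $\{1,\dots,n_c\}$ and $\{n_c+1,\dots,n\}$. $P_\sharp,R_\sharp\in\mathbb{C}^{n\times n_c}$ are any matrices with $\mathrm{range}(P_\sharp)=\mathrm{span}\{\bm v_{r,1},\dots,\bm v_{r,n_c}\}$ and $\mathrm{range}(R_\sharp)=\mathrm{span}\{\bm v_{l,1},\dots,\bm v_{l,n_c}\}$. For Hermitian positive definite $\mathcal{N}$, $\langle x,y\rangle_{\mathcal N}=y^*\mathcal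 N x$; a matrix $Z$ is $\mathcal N$-orthogonal if $\langle Zx,y\rangle_{\mathcal N}=\langle x,Zy\rangle_{\mathcal N}$ for all $x,y$. *)

theory Defs
  imports "Jordan_Normal_Form.Schur_Decomposition"
begin

(* conjugate transpose: mat_adjoint (from Schur_Decomposition); entry (i,j) = cnj (A $$ (j,i)) *)

(* the inverse of a square matrix (meaningful when it is invertible) *)
definition inv_mat :: "complex mat \<Rightarrow> complex mat" where
  "inv_mat B = (SOME C. C \<in> carrier_mat (dim_row B) (dim_row B) \<and> inverts_mat B C \<and> inverts_mat C B)"

definition diagonalizable_mat :: "complex mat \<Rightarrow> bool" where
  "diagonalizable_mat B \<longleftrightarrow> (\<exists>D. diagonal_mat D \<and> similar_mat B D)"

definition diag_of :: "nat \<Rightarrow> (nat \<Rightarrow> complex) \<Rightarrow> complex mat" where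
  "diag_of n lam = mat n n (\<lambda>(i,j). if i = j then lam i else 0)"

definition N_inner :: "complex mat \<Rightarrow> complex vec \<Rightarrow> complex vec \<Rightarrow> complex" where
  "N_inner N x y = conjugate y \<bullet> (N *\<^sub>v x)"

definition herm_pos_def :: "nat \<Rightarrow> complex mat \<Rightarrow> bool" where
  "herm_pos_def n N \<longleftrightarrow> N \<in> carrier_mat n n \<and> mat_adjoint N = N \<and>
     (\<forall>x \<in> carrier_vec n. x \<noteq> 0\<^sub>v n \<longrightarrow>
        Im (conjugate x \<bullet> (N *\<^sub>v x)) = 0 \<and> Re (conjugate x \<bullet> (N *\<^sub>v x)) > 0)"

definition N_orthogonal :: "nat \<Rightarrow> complex mat \<Rightarrow> complex mat \<Rightarrow> bool" where
  "N_orthogonal n N Z \<longleftrightarrow>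
     (\<forall>x \<in> carrier_vec n. \<forall>y \<in> carrier_vec n. N_inner N (Z *\<^sub>v x) y = N_inner N x (Z *\<^sub>v y))"

(* CF-block diagonal w.r.t. the partition {0..<nc}, {nc..<n} (0-based indices) *)
definition CF_block_diag :: "nat \<Rightarrow> nat \<Rightarrow> complex mat \<Rightarrow> bool" where
  "CF_block_diag n nc B \<longleftrightarrow> B \<in> carrier_mat n n \<and>
     (\<forall>i<n. \<forall>j<n. (i < nc) \<noteq> (j < nc) \<longrightarrow> B $$ (i,j) = 0)"

definition col_range :: "complex mat \<Rightarrow> complex vec set" where
  "col_range P = {P *\<^sub>v x | x. x \<in> carrier_vec (dim_col P)}"

definition first_cols_span :: "complex mat \<Rightarrow> nat \<Rightarrow> complex vec set" where
  "first_cols_span V k = {V *\<^sub>v y | y. y \<in> carrier_vec (dim_col V) \<and> (\<forall>i. k \<le> i \<longrightarrow> i < dim_col V \<longrightarrow> y $ i = 0)}"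

definition Pi_proj :: "complex mat \<Rightarrow> complex mat \<Rightarrow> complex mat \<Rightarrow> complex mat" where
  "Pi_proj A P R = P * inv_mat (mat_adjoint R * A * P) * mat_adjoint R * A"

end

(* Write P = Vr X and R = Vl Y with E = diag(I_nc, 0). The range conditions say that X and Y
   live on the first nc coordinates and have full rank there: E X = X, X X' = E and Y' Y = I for
   suitable X', Y'. Since D = Vl^* A Vr is diagonal it commutes with E, so the coarse operator
   R^* A P = Y^* D X satisfies (R^* A P) X' = Y^* D; hence it is invertible and Pi Vr = Vr E.
   N-orthogonality of Pi means Pi^* N = N Pi, which after congruence by Vr becomes E B = B E for
   B = Vr^* N Vr, i.e. B is CF-block diagonal. *)

theory Submission
  imports Defs
begin

lemma mat_adjoint_dim [simp]:
  "dim_row (mat_adjoint A) = dim_col A" "dim_col (mat_adjoint A) = dim_row A"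
  unfolding mat_adjoint_def by auto

lemma mat_adjoint_index [simp]:
  "i < dim_col A \<Longrightarrow> j < dim_row A \<Longrightarrow> mat_adjoint A $$ (i,j) = conjugate (A $$ (j,i))"
  unfolding mat_adjoint_def by (simp add: mat_of_rows_index)

lemma mat_adjoint_carrier [simp]: "A \<in> carrier_mat n m \<Longrightarrow> mat_adjoint A \<in> carrier_mat m n"
  by (rule carrier_matI) auto

lemma mat_adjoint_adjoint [simp]: "mat_adjoint (mat_adjoint (A :: 'a :: conjugatable_field mat)) = A"
  by (rule eq_matI) simp_all

lemma mat_adjoint_one [simp]: "mat_adjoint (1\<^sub>m n :: complex mat) = 1\<^sub>m n"
  by (rule eq_matI) simp_all

lemma mat_adjoint_mult:
  assumes "(A :: 'a :: conjugatable_field mat) \<in> carrier_mat n m" "B \<in> carrier_mat m k"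
  shows "mat_adjoint (A * B) = mat_adjoint B * mat_adjoint A"
proof (rule eq_matI)
  fix i j assume "i < dim_row (mat_adjoint B * mat_adjoint A)" "j < dim_col (mat_adjoint B * mat_adjoint A)"
  with assms have i: "i < k" and j: "j < n" by auto
  have "mat_adjoint (A * B) $$ (i,j) = conjugate (\<Sum>l<m. A $$ (j,l) * B $$ (l,i))"
    using assms i j by (simp add: scalar_prod_def atLeast0LessThan)
  also have "\<dots> = (\<Sum>l<m. conjugate (B $$ (l,i)) * conjugate (A $$ (j,l)))"
    by (simp add: sum_conjugate conjugate_dist_mul mult.commute)
  also have "\<dots> = (mat_adjoint B * mat_adjoint A) $$ (i,j)"
    using assms i j by (simp add: scalar_prod_def atLeast0LessThan)
  finally show "mat_adjoint (A * B) $$ (i,j) = (mat_adjoint B * mat_adjoint A) $$ (i,j)" .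
qed (use assms in auto)

lemma conjugate_mult_mat_vec_scalar_prod:
  assumes "(Z :: 'a :: conjugatable_field mat) \<in> carrier_mat n n"
    and "y \<in> carrier_vec n" "w \<in> carrier_vec n"
  shows "conjugate (Z *\<^sub>v y) \<bullet> w = conjugate y \<bullet> (mat_adjoint Z *\<^sub>v w)"
proof -
  have "conjugate (Z *\<^sub>v y) \<bullet> w
      = (\<Sum>i<n. \<Sum>k<n. conjugate (y $ k) * (conjugate (Z $$ (i,k)) * w $ i))"
    using assms by (simp add: scalar_prod_def sum_conjugate conjugate_dist_mul
        sum_distrib_left sum_distrib_right mult_ac atLeast0LessThan)
  also have "\<dots> = (\<Sum>k<n. \<Sum>i<n. conjugate (y $ k) * (conjugate (Z $$ (i,k)) * w $ i))"
    by (rule sum.swap)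
  also have "\<dots> = conjugate y \<bullet> (mat_adjoint Z *\<^sub>v w)"
    using assms by (simp add: scalar_prod_def sum_distrib_left atLeast0LessThan)
  finally show ?thesis .
qed

lemma assoc_mult_mat_dims:
  "dim_col A = dim_row B \<Longrightarrow> dim_col B = dim_row C \<Longrightarrow>
    (A :: 'a :: semiring_0 mat) * B * C = A * (B * C)"
  by (rule assoc_mult_mat[of A "dim_row A" "dim_row B" B "dim_row C" C "dim_col C"]) auto

lemma inv_matD:
  assumes B: "B \<in> carrier_mat n n" and "invertible_mat B"
  shows "inv_mat B \<in> carrier_mat n n" "B * inv_mat B = 1\<^sub>m n" "inv_mat B * B = 1\<^sub>m n"
proof -
  obtain C where BC: "B * C = 1\<^sub>m n" and CB: "C * B = 1\<^sub>m (dim_row C)"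
    using assms unfolding invertible_mat_def inverts_mat_def by auto
  have "C \<in> carrier_mat n n"
    using arg_cong[OF BC, of dim_col] arg_cong[OF CB, of dim_col] B by (auto intro: carrier_matI)
  with BC CB B have "\<exists>C. C \<in> carrier_mat (dim_row B) (dim_row B) \<and> inverts_mat B C \<and> inverts_mat C B"
    unfolding inverts_mat_def by auto
  then have "inv_mat B \<in> carrier_mat (dim_row B) (dim_row B) \<and> inverts_mat B (inv_mat B)
      \<and> inverts_mat (inv_mat B) B"
    unfolding inv_mat_def by (rule someI_ex)
  with B show "inv_mat B \<in> carrier_mat n n" "B * inv_mat B = 1\<^sub>m n" "inv_mat B * B = 1\<^sub>m n"
    unfolding inverts_mat_def by auto
qed

lemma invertible_matI:
  assumes "(B :: 'a :: field mat) \<in> carrier_mat n n" "C \<in> carrier_mat n n" "B * C = 1\<^sub>m n"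
  shows "invertible_mat B"
  using assms mat_mult_left_right_inverse[OF assms] unfolding invertible_mat_def inverts_mat_def
  by (auto simp: square_mat.simps)

lemma invertible_mult_mat:
  assumes A: "(A :: complex mat) \<in> carrier_mat n n" "invertible_mat A"
    and B: "B \<in> carrier_mat n n" "invertible_mat B"
  shows "invertible_mat (A * B)"
proof (rule invertible_matI)
  note IA = inv_matD[OF A] and IB = inv_matD[OF B]
  have "A * B * (inv_mat B * inv_mat A) = A * (B * inv_mat B) * inv_mat A"
    using A B IA(1) IB(1) by (simp add: assoc_mult_mat_dims)
  also have "\<dots> = 1\<^sub>m n"
    using A IA IB by simp
  finally show "A * B * (inv_mat B * inv_mat A) = 1\<^sub>m n" .
qed (use A B inv_matD[OF A] inv_matD[OF B] in auto)

lemma invertible_mat_adjoint: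
  assumes V: "(V :: complex mat) \<in> carrier_mat n n" "invertible_mat V"
  shows "invertible_mat (mat_adjoint V)"
proof (rule invertible_matI)
  show "mat_adjoint V * mat_adjoint (inv_mat V) = 1\<^sub>m n"
    using inv_matD[OF V] V by (simp flip: mat_adjoint_mult)
qed (use inv_matD[OF V] V in auto)

lemma invertible_mat_mult_left_cancel:
  assumes V: "(V :: complex mat) \<in> carrier_mat n n" "invertible_mat V"
    and "K \<in> carrier_mat n m" "K' \<in> carrier_mat n m" "V * K = V * K'"
  shows "K = K'"
proof -
  note IV = inv_matD[OF V]
  have "K = (inv_mat V * V) * K"
    using IV(3) assms(3) by simp
  also have "\<dots> = inv_mat V * (V * K')"
    using IV(1) V(1) assms(3,5) by simp
  also have "\<dots> = (inv_mat V * V) * K'"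
    using IV(1) V(1) assms(4) by simp
  also have "\<dots> = K'"
    using IV(3) assms(4) by simp
  finally show ?thesis .
qed

definition first_coords_proj :: "nat \<Rightarrow> nat \<Rightarrow> complex mat" where
  "first_coords_proj n k = diag_of n (\<lambda>i. if i < k then 1 else 0)"

lemma diag_of_carrier [simp]: "diag_of n d \<in> carrier_mat n n"
  and diag_of_dim [simp]: "dim_row (diag_of n d) = n" "dim_col (diag_of n d) = n"
  by (auto simp: diag_of_def)

lemma diag_of_mult_index:
  assumes "B \<in> carrier_mat n m" "i < n" "j < m"
  shows "(diag_of n d * B) $$ (i,j) = d i * B $$ (i,j)"
proof -
  have "(diag_of n d * B) $$ (i,j) = (\<Sum>k<n. (if i = k then d i else 0) * B $$ (k,j))"
    using assms by (simp add: diag_of_def scalar_prod_def atLeast0LessThan)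
  also have "\<dots> = (\<Sum>k<n. if i = k then d i * B $$ (k,j) else 0)"
    by (rule sum.cong) auto
  finally show ?thesis
    using assms by simp
qed

lemma mult_diag_of_index:
  assumes "B \<in> carrier_mat m n" "i < m" "j < n"
  shows "(B * diag_of n d) $$ (i,j) = B $$ (i,j) * d j"
proof -
  have "(B * diag_of n d) $$ (i,j) = (\<Sum>k<n. B $$ (i,k) * (if k = j then d k else 0))"
    using assms by (simp add: diag_of_def scalar_prod_def atLeast0LessThan)
  also have "\<dots> = (\<Sum>k<n. if k = j then B $$ (i,k) * d k else 0)"
    by (rule sum.cong) auto
  finally show ?thesis
    using assms by simp
qed

lemma first_coords_proj_carrier [simp]: "first_coords_proj n k \<in> carrier_mat n n"
  and first_coords_proj_dim [simp]:
    "dim_row (first_coords_proj n k) = n" "dim_col (first_coords_proj n k) = n"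
  by (simp_all add: first_coords_proj_def)

lemma index_first_coords_proj [simp]:
  "i < n \<Longrightarrow> j < n \<Longrightarrow> first_coords_proj n k $$ (i,j) = (if i = j \<and> i < k then 1 else 0)"
  by (simp add: first_coords_proj_def diag_of_def)

lemma first_coords_proj_mult_index:
  "B \<in> carrier_mat n m \<Longrightarrow> i < n \<Longrightarrow> j < m \<Longrightarrow>
    (first_coords_proj n k * B) $$ (i,j) = (if i < k then B $$ (i,j) else 0)"
  unfolding first_coords_proj_def by (subst diag_of_mult_index) auto

lemma mult_first_coords_proj_index:
  "B \<in> carrier_mat m n \<Longrightarrow> i < m \<Longrightarrow> j < n \<Longrightarrow>
    (B * first_coords_proj n k) $$ (i,j) = (if j < k then B $$ (i,j) else 0)"
  unfolding first_coords_proj_def by (subst mult_diag_of_index) auto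

lemma first_coords_proj_mult_vec_index:
  "y \<in> carrier_vec n \<Longrightarrow> i < n \<Longrightarrow> (first_coords_proj n k *\<^sub>v y) $ i = (if i < k then y $ i else 0)"
  by (simp add: first_coords_proj_def diag_of_def scalar_prod_def atLeast0LessThan
      if_distrib[of "\<lambda>x. x * _"] sum.delta cong: if_cong)

lemma mat_adjoint_first_coords_proj [simp]:
  "mat_adjoint (first_coords_proj n k) = first_coords_proj n k"
  by (rule eq_matI) auto

lemma first_coords_proj_idem [simp]:
  "first_coords_proj n k * first_coords_proj n k = first_coords_proj n k"
  by (rule eq_matI)
    (auto simp: first_coords_proj_mult_index[OF first_coords_proj_carrier] simp del: index_mult_mat(1))

lemma commute_first_coords_proj_iff_CF_block_diag:
  assumes B: "B \<in> carrier_mat n n"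
  shows "first_coords_proj n k * B = B * first_coords_proj n k \<longleftrightarrow> CF_block_diag n k B"
proof -
  have "first_coords_proj n k * B = B * first_coords_proj n k \<longleftrightarrow>
      (\<forall>i<n. \<forall>j<n. (if i < k then B $$ (i,j) else 0) = (if j < k then B $$ (i,j) else 0))"
    using B by (simp add: mat_eq_iff first_coords_proj_mult_index mult_first_coords_proj_index
        del: index_mult_mat(1))
  also have "\<dots> \<longleftrightarrow> (\<forall>i<n. \<forall>j<n. (i < k) \<noteq> (j < k) \<longrightarrow> B $$ (i,j) = 0)"
    by auto
  finally show ?thesis
    using B unfolding CF_block_diag_def by blast
qed

lemma diagonal_mat_commute_first_coords_proj:
  assumes "D \<in> carrier_mat n n" "diagonal_mat D"
  shows "first_coords_proj n k * D = D * first_coords_proj n k"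
  using assms unfolding commute_first_coords_proj_iff_CF_block_diag[OF assms(1)]
    CF_block_diag_def diagonal_mat_def by auto

lemma N_orthogonal_iff_adjoint_commute:
  assumes N: "N \<in> carrier_mat n n" and Z: "Z \<in> carrier_mat n n"
  shows "N_orthogonal n N Z \<longleftrightarrow> mat_adjoint Z * N = N * Z"
proof -
  have inner: "N_inner N (Z *\<^sub>v x) y = conjugate y \<bullet> ((N * Z) *\<^sub>v x)"
    "N_inner N x (Z *\<^sub>v y) = conjugate y \<bullet> ((mat_adjoint Z * N) *\<^sub>v x)"
    if "x \<in> carrier_vec n" "y \<in> carrier_vec n" for x y
    using that N Z assoc_mult_mat_vec[OF mat_adjoint_carrier[OF Z] N that(1)]
    by (simp_all add: N_inner_def conjugate_mult_mat_vec_scalar_prod)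
  have entry: "conjugate (unit_vec n i) \<bullet> (K *\<^sub>v unit_vec n j) = K $$ (i,j)"
    if "(K :: complex mat) \<in> carrier_mat n n" "i < n" "j < n" for K i j
  proof -
    have "conjugate (unit_vec n i) = (unit_vec n i :: complex vec)"
      by (rule eq_vecI) (auto simp: unit_vec_def)
    with that show ?thesis
      by simp
  qed
  show ?thesis
  proof
    assume orth: "N_orthogonal n N Z"
    show "mat_adjoint Z * N = N * Z"
    proof (rule eq_matI)
      fix i j assume "i < dim_row (N * Z)" "j < dim_col (N * Z)"
      with N Z have ij: "i < n" "j < n" by auto
      have "(mat_adjoint Z * N) $$ (i,j) = N_inner N (unit_vec n j) (Z *\<^sub>v unit_vec n i)"
        unfolding inner(2)[OF unit_vec_carrier unit_vec_carrier]
        by (rule entry[symmetric]) (use N Z ij in auto)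
      also have "\<dots> = N_inner N (Z *\<^sub>v unit_vec n j) (unit_vec n i)"
        using orth unfolding N_orthogonal_def by simp
      also have "\<dots> = (N * Z) $$ (i,j)"
        unfolding inner(1)[OF unit_vec_carrier unit_vec_carrier]
        by (rule entry) (use N Z ij in auto)
      finally show "(mat_adjoint Z * N) $$ (i,j) = (N * Z) $$ (i,j)" .
    qed (use N Z in auto)
  qed (simp add: N_orthogonal_def inner)
qed

lemma col_range_subset_imp_factor:
  assumes B: "B \<in> carrier_mat n k" and Q: "Q \<in> carrier_mat n m"
    and sub: "col_range B \<subseteq> col_range Q"
  obtains C where "C \<in> carrier_mat m k" "B = Q * C"
proof -
  have "\<forall>j\<in>{..<k}. \<exists>c. c \<in> carrier_vec m \<and> col B j = Q *\<^sub>v c"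
  proof
    fix j assume "j \<in> {..<k}"
    with B have "col B j = B *\<^sub>v unit_vec k j"
      by (intro eq_vecI) auto
    then have "col B j \<in> col_range B"
      unfolding col_range_def using B by auto
    with sub Q show "\<exists>c. c \<in> carrier_vec m \<and> col B j = Q *\<^sub>v c"
      unfolding col_range_def by auto
  qed
  then obtain c where c: "\<And>j. j < k \<Longrightarrow> c j \<in> carrier_vec m \<and> col B j = Q *\<^sub>v c j"
    by (metis bchoice lessThan_iff)
  define C where "C = mat m k (\<lambda>(i,j). c j $ i)"
  have C: "C \<in> carrier_mat m k"
    unfolding C_def by simp
  have "B = Q * C"
  proof (rule mat_col_eqI)
    fix j assume "j < dim_col (Q * C)"
    with C have j: "j < k" by simp
    then have "col C j = c j"
      using c[OF j] unfolding C_def by (intro eq_vecI) auto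
    with c[OF j] C j show "col B j = col (Q * C) j"
      by (simp add: col_mult2[OF Q C])
  qed (use B C Q in auto)
  with C that show ?thesis by blast
qed

lemma first_cols_span_eq_col_range:
  assumes V: "V \<in> carrier_mat n n"
  shows "first_cols_span V k = col_range (V * first_coords_proj n k)"
proof (intro equalityI subsetI)
  let ?E = "first_coords_proj n k"
  have mult: "(V * ?E) *\<^sub>v y = V *\<^sub>v (?E *\<^sub>v y)" if "y \<in> carrier_vec n" for y
    by (rule assoc_mult_mat_vec[OF V first_coords_proj_carrier that])
  fix x
  show "x \<in> col_range (V * ?E)" if x: "x \<in> first_cols_span V k"
  proof -
    obtain y where y: "y \<in> carrier_vec n" "\<forall>i. k \<le> i \<longrightarrow> i < n \<longrightarrow> y $ i = 0" "x = V *\<^sub>v y"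
      using x V unfolding first_cols_span_def by auto
    then have "?E *\<^sub>v y = y"
      by (auto simp: vec_eq_iff first_coords_proj_mult_vec_index simp del: index_mult_mat_vec)
    with y mult have "x = (V * ?E) *\<^sub>v y"
      by simp
    with y(1) V show ?thesis
      unfolding col_range_def by auto
  qed
  show "x \<in> first_cols_span V k" if x: "x \<in> col_range (V * ?E)"
  proof -
    obtain z where z: "z \<in> carrier_vec n" "x = V *\<^sub>v (?E *\<^sub>v z)"
      using x mult unfolding col_range_def by auto
    then have "\<forall>i. k \<le> i \<longrightarrow> i < n \<longrightarrow> (?E *\<^sub>v z) $ i = 0"
      by (simp add: first_coords_proj_mult_vec_index del: index_mult_mat_vec)
    moreover have "?E *\<^sub>v z \<in> carrier_vec n"
      by (rule carrier_vecI) simp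
    ultimately show ?thesis
      unfolding first_cols_span_def carrier_matD[OF V] using z(2) by blast
  qed
qed

(* A one-sided inverse of a square matrix is two-sided; apply this to the leading k x k blocks. *)
lemma left_inverse_of_first_coords_proj_factor:
  assumes X: "X \<in> carrier_mat n k" and X': "X' \<in> carrier_mat k n" and "k \<le> n"
    and EX: "first_coords_proj n k * X = X" and XX': "X * X' = first_coords_proj n k"
  shows "X' * X = 1\<^sub>m k"
proof -
  define T where "T = mat k k (\<lambda>(i,j). X $$ (i,j))"
  define T' where "T' = mat k k (\<lambda>(i,j). X' $$ (i,j))"
  have T: "T \<in> carrier_mat k k" and T': "T' \<in> carrier_mat k k"
    unfolding T_def T'_def by auto
  have X_lower: "X $$ (i,j) = 0" if "k \<le> i" "i < n" "j < k" for i j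
    using first_coords_proj_mult_index[OF X, of i j k] that EX by simp
  have "T * T' = 1\<^sub>m k"
  proof (rule eq_matI)
    fix i j assume "i < dim_row (1\<^sub>m k)" "j < dim_col (1\<^sub>m k)"
    then have ij: "i < k" "j < k" by auto
    have "(T * T') $$ (i,j) = (X * X') $$ (i,j)"
      using ij \<open>k \<le> n\<close> X X' by (simp add: T_def T'_def scalar_prod_def)
    with ij \<open>k \<le> n\<close> show "(T * T') $$ (i,j) = 1\<^sub>m k $$ (i,j)"
      unfolding XX' by simp
  qed (auto simp: T_def T'_def)
  then have T'T: "T' * T = 1\<^sub>m k"
    by (rule mat_mult_left_right_inverse[OF T T'])
  show ?thesis
  proof (rule eq_matI)
    fix i j assume "i < dim_row (1\<^sub>m k)" "j < dim_col (1\<^sub>m k)"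
    then have ij: "i < k" "j < k" by auto
    have "(X' * X) $$ (i,j) = (\<Sum>l<n. X' $$ (i,l) * X $$ (l,j))"
      using ij X X' by (simp add: scalar_prod_def atLeast0LessThan)
    also have "\<dots> = (\<Sum>l<k. X' $$ (i,l) * X $$ (l,j))"
      using \<open>k \<le> n\<close> ij X_lower by (intro sum.mono_neutral_right) auto
    also have "\<dots> = (T' * T) $$ (i,j)"
      using ij by (simp add: T_def T'_def scalar_prod_def atLeast0LessThan)
    finally show "(X' * X) $$ (i,j) = 1\<^sub>m k $$ (i,j)"
      using T'T by simp
  qed (use X X' in auto)
qed

lemma col_range_eq_first_cols_span_obtain_coords:
  assumes V: "V \<in> carrier_mat n n" "invertible_mat V"
    and Q: "Q \<in> carrier_mat n k" and "k \<le> n"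
    and range: "col_range Q = first_cols_span V k"
  obtains X X' where "X \<in> carrier_mat n k" "X' \<in> carrier_mat k n" "Q = V * X"
    "first_coords_proj n k * X = X" "X * X' = first_coords_proj n k" "X' * X = 1\<^sub>m k"
proof -
  let ?E = "first_coords_proj n k"
  have VE: "V * ?E \<in> carrier_mat n n"
    using V by simp
  have sub: "col_range Q \<subseteq> col_range (V * ?E)" "col_range (V * ?E) \<subseteq> col_range Q"
    using range first_cols_span_eq_col_range[OF V(1)] by auto
  obtain X0 where X0: "X0 \<in> carrier_mat n k" and Q_eq: "Q = V * ?E * X0"
    by (rule col_range_subset_imp_factor[OF Q VE sub(1)])
  obtain X' where X': "X' \<in> carrier_mat k n" and VE_eq: "V * ?E = Q * X'"
    by (rule col_range_subset_imp_factor[OF VE Q sub(2)])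
  define X where "X = ?E * X0"
  have X: "X \<in> carrier_mat n k"
    unfolding X_def by (rule mult_carrier_mat[OF first_coords_proj_carrier X0])
  have QVX: "Q = V * X"
    unfolding Q_eq X_def by (rule assoc_mult_mat[OF V(1) first_coords_proj_carrier X0])
  have EX: "?E * X = X"
    unfolding X_def
    by (simp flip: assoc_mult_mat[OF first_coords_proj_carrier first_coords_proj_carrier X0]
        del: assoc_mult_mat)
  have "V * (X * X') = V * ?E"
    unfolding VE_eq QVX using V X X' by simp
  then have XX': "X * X' = ?E"
    by (rule invertible_mat_mult_left_cancel[OF V mult_carrier_mat[OF X X'] first_coords_proj_carrier])
  show ?thesis
    using left_inverse_of_first_coords_proj_factor[OF X X' \<open>k \<le> n\<close> EX XX']
    by (rule that[OF X X' QVX EX XX'])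
qed

definition coarse_op :: "complex mat \<Rightarrow> complex mat \<Rightarrow> complex mat \<Rightarrow> complex mat" where
  "coarse_op A P R = mat_adjoint R * A * P"

lemma coarse_op_carrier:
  "A \<in> carrier_mat n n \<Longrightarrow> P \<in> carrier_mat n k \<Longrightarrow> R \<in> carrier_mat n k \<Longrightarrow>
    coarse_op A P R \<in> carrier_mat k k"
  unfolding coarse_op_def by (metis mult_carrier_mat mat_adjoint_carrier)

lemma Pi_proj_coarse_op: "Pi_proj A P R = P * inv_mat (coarse_op A P R) * mat_adjoint R * A"
  unfolding Pi_proj_def coarse_op_def ..

lemma coarse_op_change_basis:
  assumes "A \<in> carrier_mat n n" "Vr \<in> carrier_mat n n" "Vl \<in> carrier_mat n n"
    "X \<in> carrier_mat n k" "Y \<in> carrier_mat n k"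
  shows "coarse_op A (Vr * X) (Vl * Y) = coarse_op (mat_adjoint Vl * A * Vr) X Y"
  using assms carrier_matD[OF assms(1)] carrier_matD[OF assms(2)] carrier_matD[OF assms(3)]
    carrier_matD[OF assms(4)] carrier_matD[OF assms(5)]
  by (simp add: coarse_op_def mat_adjoint_mult assoc_mult_mat_dims)

lemma Pi_proj_change_basis:
  assumes A: "A \<in> carrier_mat n n" and Vr: "Vr \<in> carrier_mat n n" and Vl: "Vl \<in> carrier_mat n n"
    and X: "X \<in> carrier_mat n k" and Y: "Y \<in> carrier_mat n k"
    and inv: "invertible_mat (coarse_op (mat_adjoint Vl * A * Vr) X Y)"
  shows "Pi_proj A (Vr * X) (Vl * Y) * Vr = Vr * Pi_proj (mat_adjoint Vl * A * Vr) X Y"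
proof -
  have "mat_adjoint Vl * A * Vr \<in> carrier_mat n n"
    using A Vr Vl by (metis mult_carrier_mat mat_adjoint_carrier)
  then have IG: "inv_mat (coarse_op (mat_adjoint Vl * A * Vr) X Y) \<in> carrier_mat k k"
    using inv_matD(1) coarse_op_carrier X Y inv by blast
  show ?thesis
    unfolding Pi_proj_coarse_op coarse_op_change_basis[OF A Vr Vl X Y]
    using A Vr Vl X Y carrier_matD[OF A] carrier_matD[OF Vr] carrier_matD[OF Vl]
      carrier_matD[OF X] carrier_matD[OF Y] carrier_matD[OF IG]
    by (simp add: mat_adjoint_mult assoc_mult_mat_dims)
qed

lemma coarse_op_diagonal_mult_right_inverse:
  assumes D: "D \<in> carrier_mat n n" "diagonal_mat D"
    and X: "X \<in> carrier_mat n k" and X': "X' \<in> carrier_mat k n" and XX': "X * X' = first_coords_proj n k"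
    and Y: "Y \<in> carrier_mat n k" and EY: "first_coords_proj n k * Y = Y"
  shows "coarse_op D X Y * X' = mat_adjoint Y * D"
proof -
  let ?E = "first_coords_proj n k"
  note dims = carrier_matD[OF D(1)] carrier_matD[OF X] carrier_matD[OF X'] carrier_matD[OF Y]
  have "mat_adjoint Y * ?E = mat_adjoint (?E * Y)"
    using mat_adjoint_mult[OF first_coords_proj_carrier Y] by simp
  then have YE: "mat_adjoint Y * ?E = mat_adjoint Y"
    unfolding EY .
  have "coarse_op D X Y * X' = mat_adjoint Y * (D * ?E)"
    unfolding coarse_op_def XX'[symmetric] using dims by (simp add: assoc_mult_mat_dims)
  also have "\<dots> = mat_adjoint Y * ?E * D"
    unfolding diagonal_mat_commute_first_coords_proj[OF D, symmetric] using dims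
    by (simp add: assoc_mult_mat_dims)
  finally show ?thesis
    unfolding YE .
qed

lemma invertible_coarse_op_diagonal:
  assumes D: "D \<in> carrier_mat n n" "diagonal_mat D" "invertible_mat D"
    and X: "X \<in> carrier_mat n k" and X': "X' \<in> carrier_mat k n" and XX': "X * X' = first_coords_proj n k"
    and Y: "Y \<in> carrier_mat n k" and EY: "first_coords_proj n k * Y = Y"
    and Y': "Y' \<in> carrier_mat k n" and Y'Y: "Y' * Y = 1\<^sub>m k"
  shows "invertible_mat (coarse_op D X Y)"
proof (rule invertible_matI)
  note ID = inv_matD[OF D(1,3)]
  note dims = carrier_matD[OF D(1)] carrier_matD[OF X] carrier_matD[OF X'] carrier_matD[OF Y]
    carrier_matD[OF Y'] carrier_matD[OF ID(1)]
  show G: "coarse_op D X Y \<in> carrier_mat k k"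
    by (rule coarse_op_carrier[OF D(1) X Y])
  show "X' * inv_mat D * mat_adjoint Y' \<in> carrier_mat k k"
    using dims by (intro carrier_matI) auto
  have "coarse_op D X Y * (X' * inv_mat D * mat_adjoint Y')
      = (coarse_op D X Y * X') * inv_mat D * mat_adjoint Y'"
    using dims carrier_matD[OF G] by (simp add: assoc_mult_mat_dims)
  also have "\<dots> = mat_adjoint Y * (D * inv_mat D) * mat_adjoint Y'"
    unfolding coarse_op_diagonal_mult_right_inverse[OF D(1,2) X X' XX' Y EY]
    using dims by (simp add: assoc_mult_mat_dims)
  also have "\<dots> = mat_adjoint (Y' * Y)"
    using dims ID by (simp add: mat_adjoint_mult[OF Y' Y])
  finally show "coarse_op D X Y * (X' * inv_mat D * mat_adjoint Y') = 1\<^sub>m k"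
    unfolding Y'Y by simp
qed

lemma Pi_proj_diagonal:
  assumes D: "D \<in> carrier_mat n n" "diagonal_mat D" "invertible_mat D"
    and X: "X \<in> carrier_mat n k" and X': "X' \<in> carrier_mat k n" and XX': "X * X' = first_coords_proj n k"
    and Y: "Y \<in> carrier_mat n k" and EY: "first_coords_proj n k * Y = Y"
    and Y': "Y' \<in> carrier_mat k n" and Y'Y: "Y' * Y = 1\<^sub>m k"
  shows "Pi_proj D X Y = first_coords_proj n k"
proof -
  let ?G = "coarse_op D X Y"
  have G: "?G \<in> carrier_mat k k"
    by (rule coarse_op_carrier[OF D(1) X Y])
  note IG = inv_matD[OF G invertible_coarse_op_diagonal[OF assms]]
  note dims = carrier_matD[OF D(1)] carrier_matD[OF X] carrier_matD[OF X'] carrier_matD[OF Y]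
    carrier_matD[OF G] carrier_matD[OF IG(1)]
  have "Pi_proj D X Y = X * inv_mat ?G * (?G * X')"
    unfolding Pi_proj_coarse_op coarse_op_diagonal_mult_right_inverse[OF D(1,2) X X' XX' Y EY]
    using dims by (simp add: assoc_mult_mat_dims)
  also have "\<dots> = X * (inv_mat ?G * ?G) * X'"
    using dims by (simp add: assoc_mult_mat_dims)
  finally show ?thesis
    unfolding IG(3) XX'[symmetric] using X by simp
qed

lemma congruence_cancel:
  assumes V: "(V :: complex mat) \<in> carrier_mat n n" "invertible_mat V"
    and K: "K \<in> carrier_mat n n" and K': "K' \<in> carrier_mat n n"
    and eq: "mat_adjoint V * K * V = mat_adjoint V * K' * V"
  shows "K = K'"
proof -
  note V_adj = mat_adjoint_carrier[OF V(1)] invertible_mat_adjoint[OF V]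
  note dims = carrier_matD[OF V(1)] carrier_matD[OF K] carrier_matD[OF K']
  have "mat_adjoint V * (K * V) = mat_adjoint V * (K' * V)"
    using eq dims by (simp add: assoc_mult_mat_dims)
  then have "K * V = K' * V"
    by (rule invertible_mat_mult_left_cancel[OF V_adj mult_carrier_mat[OF K V(1)] mult_carrier_mat[OF K' V(1)]])
  then have "mat_adjoint V * mat_adjoint K = mat_adjoint V * mat_adjoint K'"
    by (simp flip: mat_adjoint_mult[OF K V(1)] mat_adjoint_mult[OF K' V(1)])
  then have "mat_adjoint K = mat_adjoint K'"
    by (rule invertible_mat_mult_left_cancel[OF V_adj mat_adjoint_carrier[OF K] mat_adjoint_carrier[OF K']])
  then show ?thesis
    by (metis mat_adjoint_adjoint)
qed

lemma adjoint_commute_iff_congruent: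
  assumes V: "(V :: complex mat) \<in> carrier_mat n n" "invertible_mat V"
    and Z: "Z \<in> carrier_mat n n" and D: "D \<in> carrier_mat n n" and N: "N \<in> carrier_mat n n"
    and ZV: "Z * V = V * D"
  shows "mat_adjoint Z * N = N * Z \<longleftrightarrow>
    mat_adjoint D * (mat_adjoint V * N * V) = (mat_adjoint V * N * V) * D"
proof -
  note dims = carrier_matD[OF V(1)] carrier_matD[OF Z] carrier_matD[OF D] carrier_matD[OF N]
  have "mat_adjoint V * (mat_adjoint Z * N) * V = mat_adjoint (Z * V) * N * V"
    unfolding mat_adjoint_mult[OF Z V(1)] using dims by (simp add: assoc_mult_mat_dims)
  also have "\<dots> = mat_adjoint D * (mat_adjoint V * N * V)"
    unfolding ZV mat_adjoint_mult[OF V(1) D] using dims by (simp add: assoc_mult_mat_dims)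
  finally have left: "mat_adjoint V * (mat_adjoint Z * N) * V = mat_adjoint D * (mat_adjoint V * N * V)" .
  have "mat_adjoint V * (N * Z) * V = mat_adjoint V * N * (Z * V)"
    using dims by (simp add: assoc_mult_mat_dims)
  also have "\<dots> = (mat_adjoint V * N * V) * D"
    unfolding ZV using dims by (simp add: assoc_mult_mat_dims)
  finally have right: "mat_adjoint V * (N * Z) * V = (mat_adjoint V * N * V) * D" .
  have "mat_adjoint Z * N = N * Z \<longleftrightarrow>
      mat_adjoint V * (mat_adjoint Z * N) * V = mat_adjoint V * (N * Z) * V"
    using congruence_cancel[OF V mult_carrier_mat[OF mat_adjoint_carrier[OF Z] N] mult_carrier_mat[OF N Z]]
    by auto
  then show ?thesis
    unfolding left right .
qed

lemma Pi_proj_mult_right_eigvecs: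
  assumes A: "A \<in> carrier_mat n n" "invertible_mat A"
    and Vr: "Vr \<in> carrier_mat n n" "invertible_mat Vr"
    and Vl: "Vl \<in> carrier_mat n n" "invertible_mat Vl"
    and Da: "diagonal_mat (mat_adjoint Vl * A * Vr)"
    and "k \<le> n" and P: "P \<in> carrier_mat n k" and R: "R \<in> carrier_mat n k"
    and rangeP: "col_range P = first_cols_span Vr k"
    and rangeR: "col_range R = first_cols_span Vl k"
  shows "Pi_proj A P R * Vr = Vr * first_coords_proj n k"
proof -
  let ?E = "first_coords_proj n k"
  obtain X X' where X: "X \<in> carrier_mat n k" "X' \<in> carrier_mat k n" "P = Vr * X"
    "?E * X = X" "X * X' = ?E" "X' * X = 1\<^sub>m k"
    by (rule col_range_eq_first_cols_span_obtain_coords[OF Vr P \<open>k \<le> n\<close> rangeP])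
  obtain Y Y' where Y: "Y \<in> carrier_mat n k" "Y' \<in> carrier_mat k n" "R = Vl * Y"
    "?E * Y = Y" "Y * Y' = ?E" "Y' * Y = 1\<^sub>m k"
    by (rule col_range_eq_first_cols_span_obtain_coords[OF Vl R \<open>k \<le> n\<close> rangeR])
  have VlA: "mat_adjoint Vl * A \<in> carrier_mat n n"
    by (rule mult_carrier_mat[OF mat_adjoint_carrier[OF Vl(1)] A(1)])
  have D: "mat_adjoint Vl * A * Vr \<in> carrier_mat n n" "invertible_mat (mat_adjoint Vl * A * Vr)"
    by (rule mult_carrier_mat[OF VlA Vr(1)],
        intro invertible_mult_mat[OF VlA _ Vr]
          invertible_mult_mat[OF mat_adjoint_carrier[OF Vl(1)] invertible_mat_adjoint[OF Vl] A])
  show ?thesis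
    unfolding X(3) Y(3) Pi_proj_change_basis[OF A(1) Vr(1) Vl(1) X(1) Y(1)
        invertible_coarse_op_diagonal[OF D(1) Da D(2) X(1,2,5) Y(1,4,2,6)]]
      Pi_proj_diagonal[OF D(1) Da D(2) X(1,2,5) Y(1,4,2,6)] ..
qed

theorem lemma3p2:
  fixes n nc :: nat
    and A M Vr Vl N P R :: "complex mat"
    and lam :: "nat \<Rightarrow> complex"
  assumes A: "A \<in> carrier_mat n n" and M: "M \<in> carrier_mat n n"
    and A_inv: "invertible_mat A" and M_inv: "invertible_mat M"
    and diag1: "diagonalizable_mat (inv_mat M * A)"
    and diag2: "diagonalizable_mat (inv_mat (mat_adjoint M) * mat_adjoint A)"
    and Vr: "Vr \<in> carrier_mat n n" and Vr_inv: "invertible_mat Vr"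
    and Vl: "Vl \<in> carrier_mat n n" and Vl_inv: "invertible_mat Vl"
    and right_eig: "A * Vr = M * Vr * diag_of n lam"
    and left_eig: "mat_adjoint Vl * A = diag_of n lam * mat_adjoint Vl * M"
    and Da: "diagonal_mat (mat_adjoint Vl * A * Vr)"
    and Dm: "diagonal_mat (mat_adjoint Vl * M * Vr)"
    and order: "\<forall>i j. i \<le> j \<longrightarrow> j < n \<longrightarrow> cmod (1 - lam j) \<le> cmod (1 - lam i)"
    and nc: "1 \<le> nc" "nc \<le> n"
    and P: "P \<in> carrier_mat n nc" and R: "R \<in> carrier_mat n nc"
    and rangeP: "col_range P = first_cols_span Vr nc"
    and rangeR: "col_range R = first_cols_span Vl nc"
    and N: "herm_pos_def n N"
  shows "N_orthogonal n N (Pi_proj A P R) \<longleftrightarrow> CF_block_diag n nc (mat_adjoint Vr * N * Vr)"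
proof -
  have Pi_Vr: "Pi_proj A P R * Vr = Vr * first_coords_proj n nc"
    by (rule Pi_proj_mult_right_eigvecs[OF A A_inv Vr Vr_inv Vl Vl_inv Da nc(2) P R rangeP rangeR])
  have Pi: "Pi_proj A P R \<in> carrier_mat n n"
    unfolding Pi_proj_def using P A by (intro carrier_matI) simp_all
  have N': "N \<in> carrier_mat n n"
    using N unfolding herm_pos_def_def by (rule conjunct1)
  have B: "mat_adjoint Vr * N * Vr \<in> carrier_mat n n"
    by (rule mult_carrier_mat[OF mult_carrier_mat[OF mat_adjoint_carrier[OF Vr] N'] Vr])
  show ?thesis
    unfolding N_orthogonal_iff_adjoint_commute[OF N' Pi]
      adjoint_commute_iff_congruent[OF Vr Vr_inv Pi first_coords_proj_carrier N' Pi_Vr]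
      mat_adjoint_first_coords_proj
    by (rule commute_first_coords_proj_iff_CF_block_diag[OF B])
qed

end
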